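(* (i) For every $\epsilon\in\mathbb{C}$ and every $k\in\mathbb{N}_0$, $E_{2k+1}^{(2\epsilon)}(\epsilon)=0$. (ii) For every real number $r$, the Maclaurin expansion of $(\cos z)^r$ about $z=0$ is \[ (\cos z)^r=\sum_{k=0}^{\infty}(-1)^kE_{2k}^{(-r)}\biggl(-\frac{r}{2}\biggr)\frac{(2z)^{2k}}{(2k)!}. \]
   Context: For $\sigma\in\mathbb{C}$, the generalized Euler polynomials $E_k^{(\sigma)}(x)$ are defined by the generating function $\bigl(\frac{2}{e^z+1}\bigr)^\sigma e^{xz}=\sum_{k=0}^{\infty}E_k^{(\sigma)}(x)\frac{z^k}{k!}$ for $|z|<\pi$, where the power is the branch equal to $1$ at $z=0$. Likewise $(\cos z)^r$ denotes the branch that equals $1$ at $z=0$ (analytic near $0$). *)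

theory Defs
  imports "HOL-Analysis.Analysis"
begin

text \<open>The power is taken with the principal logarithm
  (complex powr), which near z = 0 coincides with the branch equal to 1 at z = 0;
  the coefficients only depend on the germ at 0.\<close>
definition euler_gf :: "complex \<Rightarrow> complex \<Rightarrow> complex \<Rightarrow> complex" where
  "euler_gf \<sigma> x z = (2 / (exp z + 1)) powr \<sigma> * exp (x * z)"

text \<open>E_k^{(sigma)}(x) = k-th derivative at 0 of the generating function,
  i.e. k! times its k-th Maclaurin coefficient.\<close>
definition gen_euler_poly :: "nat \<Rightarrow> complex \<Rightarrow> complex \<Rightarrow> complex" where
  "gen_euler_poly k \<sigma> x = (deriv ^^ k) (euler_gf \<sigma> x) 0"

end

theory Submission
  imports Defs "HOL-Complex_Analysis.Complex_Analysis"
begin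

text \<open>
  For \<sigma> = 2\<epsilon> and x = \<epsilon> the generating function is (2 / (e^(z/2) + e^(-z/2)))^(2\<epsilon>),
  an even function of z, so its odd derivatives at 0 vanish. For \<sigma> = -r and x = -r/2
  the same algebra at 2iz gives (cos z)^r; so the Maclaurin series of the generating
  function, evaluated at 2iz, has only even terms, and (2iz)^(2k) = (-1)^k (2z)^(2k)
  turns it into the claimed series. On the strip |Im z| < \<pi>/2 the base 2 / (e^z + 1)
  has positive real part, so the principal logarithms in both computations add
  without 2\<pi>i corrections.
\<close>

lemma Re_exp_pos:
  fixes z :: complex
  assumes "\<bar>Im z\<bar> < pi / 2"
  shows "0 < Re (exp z)"
  using assms cos_gt_zero_pi[of "Im z"] by (simp add: Re_exp)

lemma Re_euler_base_pos:
  fixes z :: complex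
  assumes "\<bar>Im z\<bar> < pi / 2"
  shows "0 < Re (2 / (exp z + 1))"
proof -
  have "0 < Re (exp z + 1)"
    using Re_exp_pos[OF assms] by simp
  then have "exp z + 1 \<noteq> 0"
    by (metis less_irrefl zero_complex.sel(1))
  with \<open>0 < Re (exp z + 1)\<close> show ?thesis
    by (simp add: Re_divide')
qed

lemma euler_gf_holomorphic: "euler_gf \<sigma> x holomorphic_on {z. \<bar>Im z\<bar> < pi / 2}"
  unfolding euler_gf_def
  using Re_euler_base_pos
  by (intro holomorphic_intros holomorphic_on_powr)
     (fastforce simp: complex_nonpos_Reals_iff)+

lemma ball_subset_Im_strip: "ball (0::complex) r \<subseteq> {z. \<bar>Im z\<bar> < r}"
  by (auto intro: le_less_trans[OF abs_Im_le_cmod])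

lemma euler_gf_holomorphic_on_ball: "euler_gf \<sigma> x holomorphic_on ball 0 (pi / 2)"
  using euler_gf_holomorphic ball_subset_Im_strip by (rule holomorphic_on_subset)

lemma euler_gf_even:
  fixes \<epsilon> z :: complex
  assumes "\<bar>Im z\<bar> < pi / 2"
  shows "euler_gf (2 * \<epsilon>) \<epsilon> (- z) = euler_gf (2 * \<epsilon>) \<epsilon> z"
proof -
  define u where "u = 2 / (exp z + 1)"
  have "0 < Re u"
    using Re_euler_base_pos[OF assms] by (simp add: u_def)
  then have "u \<noteq> 0"
    by auto
  have "exp z + 1 \<noteq> 0"
    using \<open>u \<noteq> 0\<close> by (auto simp: u_def)
  have base: "2 / (exp (- z) + 1) = exp z * u"
    using \<open>exp z + 1 \<noteq> 0\<close> by (simp add: u_def exp_minus field_simps)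
  have "Ln (exp z * u) = z + Ln u"
    using Re_Ln_pos_lt_imp[OF \<open>0 < Re u\<close>] assms \<open>u \<noteq> 0\<close>
    by (intro Ln_unique) (auto simp: exp_add)
  then have "euler_gf (2 * \<epsilon>) \<epsilon> (- z) = exp (2 * \<epsilon> * (z + Ln u)) * exp (- (\<epsilon> * z))"
    using \<open>u \<noteq> 0\<close> by (simp add: euler_gf_def powr_def base)
  also have "\<dots> = exp (2 * \<epsilon> * Ln u) * exp (\<epsilon> * z)"
    by (simp flip: exp_add add: algebra_simps)
  also have "\<dots> = euler_gf (2 * \<epsilon>) \<epsilon> z"
    using \<open>u \<noteq> 0\<close> by (simp add: euler_gf_def powr_def u_def)
  finally show ?thesis .
qed

lemma higher_deriv_odd_eq_0_if_even:
  fixes f :: "complex \<Rightarrow> complex"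
  assumes holf: "f holomorphic_on ball 0 r" and "0 < r"
    and even: "\<And>w. w \<in> ball 0 r \<Longrightarrow> f (- w) = f w"
  shows "(deriv ^^ (2 * k + 1)) f 0 = 0"
proof -
  have "eventually (\<lambda>w. f w = f (- 1 * w)) (nhds 0)"
    using eventually_nhds_in_open[of "ball 0 r" 0] \<open>0 < r\<close>
    by (auto elim!: eventually_mono simp: even)
  then have "(deriv ^^ (2 * k + 1)) f 0 = (deriv ^^ (2 * k + 1)) (\<lambda>w. f (- 1 * w)) 0"
    by (rule higher_deriv_cong_ev) simp
  also have "\<dots> = (- 1) ^ (2 * k + 1) * (deriv ^^ (2 * k + 1)) f (- 1 * 0)"
    by (rule higher_deriv_compose_linear[OF holf, of "ball 0 r"]) (use \<open>0 < r\<close> in auto)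
  finally show ?thesis
    by simp
qed

lemma gen_euler_poly_odd_eq_0: "gen_euler_poly (2 * k + 1) (2 * \<epsilon>) \<epsilon> = 0"
  unfolding gen_euler_poly_def
  using euler_gf_holomorphic_on_ball
proof (rule higher_deriv_odd_eq_0_if_even)
  fix w :: complex
  assume "w \<in> ball 0 (pi / 2)"
  with ball_subset_Im_strip show "euler_gf (2 * \<epsilon>) \<epsilon> (- w) = euler_gf (2 * \<epsilon>) \<epsilon> w"
    by (intro euler_gf_even) blast
qed simp

lemma holomorphic_even_power_series:
  fixes f :: "complex \<Rightarrow> complex"
  assumes holf: "f holomorphic_on ball 0 r" and w: "w \<in> ball 0 r"
    and odd_0: "\<And>k. (deriv ^^ (2 * k + 1)) f 0 = 0"
  shows "(\<lambda>k. (deriv ^^ (2 * k)) f 0 / fact (2 * k) * w ^ (2 * k)) sums f w"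
proof -
  let ?a = "\<lambda>n. (deriv ^^ n) f 0 / fact n * w ^ n"
  have "?a sums f w"
    using holomorphic_power_series[OF holf w] by simp
  moreover have "?a n = 0" if "n \<notin> range (\<lambda>k. 2 * k)" for n
  proof -
    have "odd n"
      using that by (metis evenE rangeI)
    then obtain k where "n = 2 * k + 1"
      by (rule oddE)
    then show ?thesis
      by (simp only: odd_0) simp
  qed
  ultimately have "(\<lambda>k. ?a (2 * k)) sums f w"
    by (subst sums_mono_reindex) (auto simp: strict_mono_def)
  then show ?thesis
    by simp
qed

lemma cos_powr_eq_euler_gf:
  fixes z \<sigma> :: complex
  assumes "\<bar>Re z\<bar> < pi / 4"
  shows "cos z powr \<sigma> = euler_gf (- \<sigma>) (- \<sigma> / 2) (2 * \<i> * z)"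
proof -
  define w where "w = 2 * \<i> * z"
  have strip: "\<bar>Im w\<bar> < pi / 2"
    using assms by (simp add: w_def)
  define u where "u = 2 / (exp w + 1)"
  have "0 < Re u"
    using Re_euler_base_pos[OF strip] by (simp add: u_def)
  then have "u \<noteq> 0"
    by auto
  have "exp (- w / 2) * exp w = exp (\<i> * z)"
    by (simp add: w_def flip: exp_add)
  then have "cos z = exp (- w / 2) * (exp w + 1) / 2"
    unfolding cos_exp_eq w_def by (simp add: distrib_left)
  also have "\<dots> = exp (- w / 2) / u"
    using \<open>u \<noteq> 0\<close> by (simp add: u_def)
  finally have cos_eq: "cos z = exp (- w / 2) / u" .
  have "exp (- w / 2 - Ln u) = cos z"
    using \<open>u \<noteq> 0\<close> by (simp add: exp_diff cos_eq)
  moreover have "\<bar>Im (- w / 2 - Ln u)\<bar> < pi"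
    using Re_Ln_pos_lt_imp[OF \<open>0 < Re u\<close>] strip by simp
  ultimately have "Ln (cos z) = - w / 2 - Ln u"
    by (intro Ln_unique) (simp_all add: abs_less_iff)
  moreover have "cos z \<noteq> 0"
    using cos_eq \<open>u \<noteq> 0\<close> by simp
  ultimately have "cos z powr \<sigma> = exp (\<sigma> * (- w / 2 - Ln u))"
    by (simp add: powr_def)
  also have "\<dots> = exp (- \<sigma> * Ln u + - \<sigma> / 2 * w)"
    by (rule arg_cong[where f = exp]) (simp add: field_simps)
  also have "\<dots> = exp (- \<sigma> * Ln u) * exp (- \<sigma> / 2 * w)"
    by (rule exp_add)
  also have "\<dots> = euler_gf (- \<sigma>) (- \<sigma> / 2) w"
    using \<open>u \<noteq> 0\<close> by (simp add: euler_gf_def powr_def u_def)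
  finally show ?thesis
    by (simp add: w_def)
qed

lemma cos_powr_sums:
  fixes z \<sigma> :: complex
  assumes "norm z < pi / 4"
  shows "(\<lambda>k. (-1)^k * gen_euler_poly (2*k) (- \<sigma>) (- \<sigma> / 2) * (2*z)^(2*k) / fact (2*k))
           sums (cos z powr \<sigma>)"
proof -
  have "2 * \<i> * z \<in> ball 0 (pi / 2)"
    using assms by (simp add: norm_mult)
  then have "(\<lambda>k. gen_euler_poly (2*k) (- \<sigma>) (- \<sigma> / 2) / fact (2*k) * (2 * \<i> * z)^(2*k))
               sums euler_gf (- \<sigma>) (- \<sigma> / 2) (2 * \<i> * z)"
    unfolding gen_euler_poly_def
    using euler_gf_holomorphic_on_ball gen_euler_poly_odd_eq_0[of _ "- \<sigma> / 2"]
    by (intro holomorphic_even_power_series) (auto simp: gen_euler_poly_def)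
  moreover have "\<bar>Re z\<bar> < pi / 4"
    using assms abs_Re_le_cmod[of z] by linarith
  moreover have "(2 * \<i> * z)^(2*k) = (-1)^k * (2*z)^(2*k)" for k
    by (simp add: power_mult power_mult_distrib power_minus[of "4 * z\<^sup>2"])
  ultimately show ?thesis
    by (simp add: cos_powr_eq_euler_gf ac_simps)
qed

theorem mainTheorem3:
  shows "(\<forall>(\<epsilon>::complex) (k::nat). gen_euler_poly (2*k+1) (2*\<epsilon>) \<epsilon> = 0) \<and>
         (\<forall>r::real. \<exists>\<delta>>0. \<forall>z::complex. norm z < \<delta> \<longrightarrow>
            (\<lambda>k. (-1)^k * gen_euler_poly (2*k) (- of_real r) (- of_real r / 2)
                   * (2*z)^(2*k) / fact (2*k)) sums (cos z powr of_real r))"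
  using gen_euler_poly_odd_eq_0 cos_powr_sums pi_gt_zero
  by (intro conjI allI exI[of _ "pi / 4"]) auto

end
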